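(* In the setting of the context, with $R(t)=-\frac{\gamma}{\beta}\log\varphi^{-1}(t)$, we have $R(\infty):=\lim_{t\to\infty}R(t)=\alpha$, \[ R(\infty)=N-\tilde S e^{(\beta/\gamma)\tilde R}e^{-(\beta/\gamma)R(\infty)}, \] and $R$ is increasing on $[0,\infty)$ with $\tilde R\le R(t)<\alpha=R(\infty)$ for all $t\ge0$.
   Context: Let $\beta,\gamma,\delta>0$ be constants and $\tilde S,\tilde E,\tilde I,\tilde R$ real numbers with $N:=\tilde S+\tilde E+\tilde I+\tilde R>0$. Standing assumptions: (A1) $\tilde I>0$; (A2) $\tilde E>(\gamma/\delta)\tilde I$; (A3) $\tilde S>\delta\tilde E/(\beta\tilde I)$; (A4) $\tilde R\ge 0$ and $N>\tilde S e^{(\beta/\gamma)\tilde R}+\tilde R$. Let $\alpha$ be the unique solution in $(\tilde R,N)$ of $x=N-\tilde S e^{(\beta/\gamma)\tilde R}e^{-(\beta/\gamma)x}$, and assume (A5) $\tilde S<(\gamma/\beta)e^{(\beta/\gamma)(\alpha-\tilde R)}$. Put $u_0:=e^{-(\beta/\gamma)\tilde R}$, $u_\infty:=e^{-(\beta/\gamma)\alpha}$. Let $\psi$ be the unique function, continuous and positive on $(u_\infty,u_0]$ and $C^1$ on $(u_\infty,u_0)$, satisfying $\psi'(u)\psi(u)-\frac{\gamma+\delta}{u}\psi(u)=-\delta\,\frac{\beta N-\beta\tilde S e^{(\beta/\gamma)\tilde R}u+\gamma\log u}{u}$ on $(u_\infty,u_0)$ and $\psi(u_0)=\beta\tilde I$.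 Let $\varphi(u):=\int_u^{u_0}\frac{d\xi}{\xi\psi(\xi)}$; $\varphi$ is a strictly decreasing continuous bijection from $(u_\infty,u_0]$ onto $[0,\infty)$, with inverse $\varphi^{-1}:[0,\infty)\to(u_\infty,u_0]$. *)

theory Defs
  imports "HOL-Analysis.Analysis"
begin

definition seir_phi :: "(real \<Rightarrow> real) \<Rightarrow> real \<Rightarrow> real \<Rightarrow> real" where
  "seir_phi \<psi> u0 u = integral {u..u0} (\<lambda>\<xi>. 1 / (\<xi> * \<psi> \<xi>))"

end

theory Submission
  imports Defs
begin

text \<open>
  The inverse of a strictly
  decreasing bijection of \<open>(uinf, u0]\<close> onto \<open>[0, \<infinity>)\<close> is strictly decreasing with values in
  \<open>(uinf, u0]\<close> and tends to \<open>uinf\<close> at infinity. Composing with the strictly decreasing map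
  \<open>u \<mapsto> -(\<gamma>/\<beta>) ln u\<close>, which sends \<open>u0\<close> to \<open>Rt\<close> and \<open>uinf\<close> to \<open>\<alpha>\<close>, shows that
  \<open>R\<close> increases from \<open>Rt\<close> towards \<open>\<alpha>\<close>; the limit equation is then the one defining \<open>\<alpha>\<close>.
\<close>

lemma strict_antimono_on_the_inv_into:
  fixes f :: "'a::linorder \<Rightarrow> 'b::linorder"
  assumes anti: "strict_antimono_on A f" and bij: "bij_betw f A B"
  shows "strict_antimono_on B (the_inv_into A f)"
proof (rule monotone_onI)
  fix x y assume xy: "x \<in> B" "y \<in> B" "x < y"
  define g where "g = the_inv_into A f"
  have inj: "inj_on f A" and img: "f ` A = B"
    using bij by (simp_all add: bij_betw_def)
  have g_in: "g x \<in> A" "g y \<in> A"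
    unfolding g_def using xy img by (auto intro!: the_inv_into_into[OF inj])
  have f_g: "f (g x) = x" "f (g y) = y"
    unfolding g_def using xy img by (simp_all add: f_the_inv_into_f[OF inj])
  have "g x \<noteq> g y" using f_g \<open>x < y\<close> by (metis less_irrefl)
  moreover have "\<not> g x < g y"
  proof
    assume "g x < g y"
    then have "f (g y) < f (g x)" using monotone_onD[OF anti g_in] by simp
    then show False using f_g \<open>x < y\<close> by simp
  qed
  ultimately show "g y < g x" by simp
qed

lemma tendsto_the_inv_into_at_top:
  fixes f :: "real \<Rightarrow> real"
  assumes anti: "strict_antimono_on {a<..b} f" and bij: "bij_betw f {a<..b} {c..}"
  shows "(the_inv_into {a<..b} f \<longlongrightarrow> a) at_top"
proof (rule tendstoI)
  fix e :: real assume "e > 0"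
  define g where "g = the_inv_into {a<..b} f"
  have inj: "inj_on f {a<..b}" and img: "f ` {a<..b} = {c..}"
    using bij by (simp_all add: bij_betw_def)
  have "c \<in> f ` {a<..b}" using img by simp
  then have "a < b" by auto
  define u where "u = min (a + e / 2) b"
  have u: "u \<in> {a<..b}" using \<open>a < b\<close> \<open>e > 0\<close> unfolding u_def by auto
  have g_fu: "g (f u) = u" unfolding g_def using u by (rule the_inv_into_f_f[OF inj])
  have fu: "f u \<in> {c..}" using u img by blast
  have g_in: "g t \<in> {a<..b}" if "t \<ge> c" for t
    unfolding g_def by (rule the_inv_into_into[OF inj]) (use that img in auto)
  have g_anti: "strict_antimono_on {c..} g"
    unfolding g_def by (rule strict_antimono_on_the_inv_into[OF anti bij])
  have "\<forall>\<^sub>F t in at_top. t > f u" by (rule eventually_gt_at_top)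
  then show "\<forall>\<^sub>F t in at_top. dist (g t) a < e"
  proof eventually_elim
    case (elim t)
    then have t: "t \<in> {c..}" using fu by simp
    have "g t < g (f u)" using monotone_onD[OF g_anti fu t elim] by simp
    then have "g t < u" unfolding g_fu .
    moreover have "a < g t" using g_in t by simp
    ultimately show ?case unfolding u_def dist_real_def by simp
  qed
qed

theorem theorem7:
  fixes \<beta> \<gamma> \<delta> S E I Rt N \<alpha> u0 uinf :: real
    and \<psi> \<psi>' :: "real \<Rightarrow> real"
  assumes pos: "\<beta> > 0" "\<gamma> > 0" "\<delta> > 0"
    and N_def: "N = S + E + I + Rt" and N_pos: "N > 0"
    and A1: "I > 0"
    and A2: "E > (\<gamma> / \<delta>) * I"
    and A3: "S > \<delta> * E / (\<beta> * I)"
    and A4: "Rt \<ge> 0" "N > S * exp ((\<beta> / \<gamma>) * Rt) + Rt"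
    and alpha_in: "\<alpha> \<in> {Rt<..<N}"
    and alpha_eq: "\<alpha> = N - S * exp ((\<beta> / \<gamma>) * Rt) * exp (- (\<beta> / \<gamma>) * \<alpha>)"
    and alpha_unique: "\<forall>x\<in>{Rt<..<N}. x = N - S * exp ((\<beta> / \<gamma>) * Rt) * exp (- (\<beta> / \<gamma>) * x) \<longrightarrow> x = \<alpha>"
    and A5: "S < (\<gamma> / \<beta>) * exp ((\<beta> / \<gamma>) * (\<alpha> - Rt))"
    and u0_def: "u0 = exp (- (\<beta> / \<gamma>) * Rt)"
    and uinf_def: "uinf = exp (- (\<beta> / \<gamma>) * \<alpha>)"
    and psi_cont: "continuous_on {uinf<..u0} \<psi>"
    and psi_pos: "\<forall>u\<in>{uinf<..u0}. \<psi> u > 0"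
    and psi_deriv: "\<forall>u\<in>{uinf<..<u0}. (\<psi> has_real_derivative \<psi>' u) (at u)"
    and psi'_cont: "continuous_on {uinf<..<u0} \<psi>'"
    and psi_ode: "\<forall>u\<in>{uinf<..<u0}. \<psi>' u * \<psi> u - (\<gamma> + \<delta>) / u * \<psi> u
                  = - \<delta> * (\<beta> * N - \<beta> * S * exp ((\<beta> / \<gamma>) * Rt) * u + \<gamma> * ln u) / u"
    and psi_init: "\<psi> u0 = \<beta> * I"
    and phi_cont: "continuous_on {uinf<..u0} (seir_phi \<psi> u0)"
    and phi_decr: "strict_antimono_on {uinf<..u0} (seir_phi \<psi> u0)"
    and phi_bij: "bij_betw (seir_phi \<psi> u0) {uinf<..u0} {0..}"
  shows "let R = (\<lambda>t. - (\<gamma> / \<beta>) * ln (the_inv_into {uinf<..u0} (seir_phi \<psi> u0) t)) in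
           (R \<longlongrightarrow> \<alpha>) at_top
         \<and> Lim at_top R = N - S * exp ((\<beta> / \<gamma>) * Rt) * exp (- (\<beta> / \<gamma>) * Lim at_top R)
         \<and> strict_mono_on {0..} R
         \<and> (\<forall>t\<ge>0. Rt \<le> R t \<and> R t < \<alpha> \<and> \<alpha> = Lim at_top R)"
proof -
  define g where "g = the_inv_into {uinf<..u0} (seir_phi \<psi> u0)"
  define c where "c = \<gamma> / \<beta>"
  define L where "L = (\<lambda>u. - c * ln u)"
  have c_pos: "c > 0" unfolding c_def using pos by simp
  have L_less: "L v < L u" if "0 < u" "u < v" for u v
    unfolding L_def using that c_pos by simp
  have L_le: "L v \<le> L u" if "0 < u" "u \<le> v" for u v
    unfolding L_def using that c_pos by simp
  have L_u0: "L u0 = Rt" and L_uinf: "L uinf = \<alpha>"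
    unfolding L_def c_def u0_def uinf_def using pos by simp_all
  have uinf_pos: "0 < uinf" unfolding uinf_def by simp
  have g_in: "g t \<in> {uinf<..u0}" if "t \<ge> 0" for t
    unfolding g_def using bij_betw_apply[OF bij_betw_the_inv_into[OF phi_bij]] that by simp
  have g_anti: "strict_antimono_on {0..} g"
    unfolding g_def by (rule strict_antimono_on_the_inv_into[OF phi_decr phi_bij])
  have g_lim: "(g \<longlongrightarrow> uinf) at_top"
    unfolding g_def by (rule tendsto_the_inv_into_at_top[OF phi_decr phi_bij])
  have R_lim: "((\<lambda>t. L (g t)) \<longlongrightarrow> \<alpha>) at_top"
    using tendsto_mult_left[OF tendsto_ln[OF g_lim], of "- c"] uinf_pos
    unfolding L_def L_uinf[symmetric] by simp
  have R_mono: "strict_mono_on {0..} (\<lambda>t. L (g t))"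
  proof (rule monotone_onI)
    fix s t :: real assume "s \<in> {0..}" "t \<in> {0..}" "s < t"
    then have "0 < g t" and "g t < g s" using monotone_onD[OF g_anti] g_in[of t] uinf_pos by auto
    then show "L (g s) < L (g t)" by (rule L_less)
  qed
  have R_bounds: "Rt \<le> L (g t) \<and> L (g t) < \<alpha>" if "t \<ge> 0" for t
    using g_in[OF that] uinf_pos L_le[of "g t" u0] L_less[of uinf "g t"]
    unfolding L_u0 L_uinf by auto
  have R_Lim: "Lim at_top (\<lambda>t. L (g t)) = \<alpha>" using R_lim by (rule tendsto_Lim[rotated]) simp
  have R_eq: "(\<lambda>t. - (\<gamma> / \<beta>) * ln (the_inv_into {uinf<..u0} (seir_phi \<psi> u0) t)) = (\<lambda>t. L (g t))"
    unfolding L_def c_def g_def by (rule refl)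
  show ?thesis
    unfolding R_eq Let_def R_Lim
  proof (intro conjI allI impI)
    fix t :: real assume "t \<ge> 0"
    then show "Rt \<le> L (g t)" "L (g t) < \<alpha>" using R_bounds by auto
  qed (rule R_lim R_mono alpha_eq refl)+
qed

end
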